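(* An integral domain $D$ is a $\ast$-wf-SH domain if and only if $D$ is a $\ast$-SH domain with trivial $\ast$-class group $Cl_\ast(D)=0$.
   Context: $\ast$ is a star operation on $D$ of finite character. A $\ast$-ideal is a nonzero fractional ideal $I$ with $I^\ast=I$; of finite type if $I=J^\ast$ for some nonzero finitely generated $J$. $I$ is $\ast$-invertible if $(II^{-1})^\ast=D$. $Cl_\ast(D)$ is the group of $\ast$-invertible fractional $\ast$-ideals under $(I,J)\mapsto (IJ)^\ast$ modulo the subgroup of nonzero principal fractional ideals. A $\ast$-homog ideal is a proper integral $\ast$-ideal $I$ of finite type such that $(A+B)^\ast\neq D$ for every pair $A,B$ of proper integral $\ast$-ideals of finite type containing $I$. $D$ is a $\ast$-SH domain if for every nonzero nonunit $x$, $xD$ is a $\ast$-product $(I_1\cdots I_n)^\ast$ of finitely many $\ast$-homog ideals. A $\ast$-wf-homog ideal is a $\ast$-homog ideal $I$ such that, if $I$ is $\ast$-invertible, then every $\ast$-invertible $\ast$-ideal containing $I$ is principal; a $\ast$-wf-homog element is a generator of a principal $\ast$-wf-homog ideal. $D$ is a $\ast$-wf-SH domain if every nonzero nonunit of $D$ is a finite product of $\ast$-wf-homog elements. *)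

theory Defs
  imports Main
begin

text \<open>Convention: the integral domain D is a subring of a field of type 'a which is
its quotient field K (every element of 'a is a quotient of elements of D).
Fractional ideals are subsets of 'a.\<close>

definition domain_with_qf :: "'a::field set \<Rightarrow> bool" where
  "domain_with_qf D \<longleftrightarrow> 0 \<in> D \<and> 1 \<in> D \<and>
     (\<forall>x\<in>D. \<forall>y\<in>D. x + y \<in> D \<and> x - y \<in> D \<and> x * y \<in> D) \<and>
     (\<forall>z. \<exists>a\<in>D. \<exists>b\<in>D. b \<noteq> 0 \<and> z = a / b)"

definition gen :: "'a::field set \<Rightarrow> 'a set \<Rightarrow> 'a set" where
  "gen D S = {(\<Sum>s\<in>F. f s * s) | F f. finite F \<and> F \<subseteq> S \<and> (\<forall>s\<in>F. f s \<in> D)}"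

definition is_submodule :: "'a::field set \<Rightarrow> 'a set \<Rightarrow> bool" where
  "is_submodule D I \<longleftrightarrow> 0 \<in> I \<and> (\<forall>x\<in>I. \<forall>y\<in>I. x + y \<in> I) \<and> (\<forall>d\<in>D. \<forall>x\<in>I. d * x \<in> I)"

definition frac_ideal :: "'a::field set \<Rightarrow> 'a set \<Rightarrow> bool" where
  "frac_ideal D I \<longleftrightarrow> is_submodule D I \<and> I \<noteq> {0} \<and>
     (\<exists>d\<in>D. d \<noteq> 0 \<and> (\<forall>x\<in>I. d * x \<in> D))"

definition fin_gen :: "'a::field set \<Rightarrow> 'a set \<Rightarrow> bool" where
  "fin_gen D I \<longleftrightarrow> (\<exists>F. finite F \<and> I = gen D F)"

definition principal :: "'a::field set \<Rightarrow> 'a \<Rightarrow> 'a set" where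
  "principal D x = {x * d | d. d \<in> D}"

definition smult_set :: "'a::field \<Rightarrow> 'a set \<Rightarrow> 'a set" where
  "smult_set x I = (\<lambda>y. x * y) ` I"

definition ideal_mult :: "'a::field set \<Rightarrow> 'a set \<Rightarrow> 'a set \<Rightarrow> 'a set" where
  "ideal_mult D I J = gen D {x * y | x y. x \<in> I \<and> y \<in> J}"

definition ideal_add :: "'a::field set \<Rightarrow> 'a set \<Rightarrow> 'a set \<Rightarrow> 'a set" where
  "ideal_add D I J = gen D (I \<union> J)"

definition ideal_prod_list :: "'a::field set \<Rightarrow> 'a set list \<Rightarrow> 'a set" where
  "ideal_prod_list D Is = foldr (ideal_mult D) Is D"

definition frac_inverse :: "'a::field set \<Rightarrow> 'a set \<Rightarrow> 'a set" where
  "frac_inverse D I = {x. \<forall>y\<in>I. x * y \<in> D}"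

definition star_op :: "'a::field set \<Rightarrow> ('a set \<Rightarrow> 'a set) \<Rightarrow> bool" where
  "star_op D st \<longleftrightarrow>
     (\<forall>I. frac_ideal D I \<longrightarrow> frac_ideal D (st I)) \<and>
     (\<forall>x. x \<noteq> 0 \<longrightarrow> st (principal D x) = principal D x) \<and>
     (\<forall>x I. x \<noteq> 0 \<longrightarrow> frac_ideal D I \<longrightarrow> st (smult_set x I) = smult_set x (st I)) \<and>
     (\<forall>I. frac_ideal D I \<longrightarrow> I \<subseteq> st I) \<and>
     (\<forall>I J. frac_ideal D I \<longrightarrow> frac_ideal D J \<longrightarrow> I \<subseteq> J \<longrightarrow> st I \<subseteq> st J) \<and>
     (\<forall>I. frac_ideal D I \<longrightarrow> st (st I) = st I)"

definition finite_character :: "'a::field set \<Rightarrow> ('a set \<Rightarrow> 'a set) \<Rightarrow> bool" where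
  "finite_character D st \<longleftrightarrow>
     (\<forall>I. frac_ideal D I \<longrightarrow>
        st I = \<Union>{st J | J. frac_ideal D J \<and> fin_gen D J \<and> J \<subseteq> I})"

definition star_ideal :: "'a::field set \<Rightarrow> ('a set \<Rightarrow> 'a set) \<Rightarrow> 'a set \<Rightarrow> bool" where
  "star_ideal D st I \<longleftrightarrow> frac_ideal D I \<and> st I = I"

definition finite_type :: "'a::field set \<Rightarrow> ('a set \<Rightarrow> 'a set) \<Rightarrow> 'a set \<Rightarrow> bool" where
  "finite_type D st I \<longleftrightarrow> (\<exists>J. frac_ideal D J \<and> fin_gen D J \<and> I = st J)"

definition star_invertible :: "'a::field set \<Rightarrow> ('a set \<Rightarrow> 'a set) \<Rightarrow> 'a set \<Rightarrow> bool" where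
  "star_invertible D st I \<longleftrightarrow> st (ideal_mult D I (frac_inverse D I)) = D"

definition is_principal :: "'a::field set \<Rightarrow> 'a set \<Rightarrow> bool" where
  "is_principal D I \<longleftrightarrow> (\<exists>x. x \<noteq> 0 \<and> I = principal D x)"

text \<open>Cl_*(D) = 0: the group of *-invertible fractional *-ideals modulo the subgroup of
nonzero principal fractional ideals is trivial, i.e. every *-invertible *-ideal is principal.\<close>
definition star_class_group_trivial :: "'a::field set \<Rightarrow> ('a set \<Rightarrow> 'a set) \<Rightarrow> bool" where
  "star_class_group_trivial D st \<longleftrightarrow>
     (\<forall>I. star_ideal D st I \<and> star_invertible D st I \<longrightarrow> is_principal D I)"

definition pift :: "'a::field set \<Rightarrow> ('a set \<Rightarrow> 'a set) \<Rightarrow> 'a set \<Rightarrow> bool" where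
  "pift D st I \<longleftrightarrow> star_ideal D st I \<and> I \<subseteq> D \<and> I \<noteq> D \<and> finite_type D st I"

definition star_homog :: "'a::field set \<Rightarrow> ('a set \<Rightarrow> 'a set) \<Rightarrow> 'a set \<Rightarrow> bool" where
  "star_homog D st I \<longleftrightarrow> pift D st I \<and>
     (\<forall>A B. pift D st A \<longrightarrow> pift D st B \<longrightarrow> I \<subseteq> A \<longrightarrow> I \<subseteq> B \<longrightarrow>
        st (ideal_add D A B) \<noteq> D)"

definition is_unit_in :: "'a::field set \<Rightarrow> 'a \<Rightarrow> bool" where
  "is_unit_in D x \<longleftrightarrow> (\<exists>y\<in>D. x * y = 1)"

definition star_SH :: "'a::field set \<Rightarrow> ('a set \<Rightarrow> 'a set) \<Rightarrow> bool" where
  "star_SH D st \<longleftrightarrow> (\<forall>x\<in>D. x \<noteq> 0 \<longrightarrow> \<not> is_unit_in D x \<longrightarrow>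
     (\<exists>Is. (\<forall>I\<in>set Is. star_homog D st I) \<and> principal D x = st (ideal_prod_list D Is)))"

definition star_wf_homog :: "'a::field set \<Rightarrow> ('a set \<Rightarrow> 'a set) \<Rightarrow> 'a set \<Rightarrow> bool" where
  "star_wf_homog D st I \<longleftrightarrow> star_homog D st I \<and>
     (star_invertible D st I \<longrightarrow>
        (\<forall>J. star_ideal D st J \<longrightarrow> star_invertible D st J \<longrightarrow> I \<subseteq> J \<longrightarrow> is_principal D J))"

definition star_wf_homog_elem :: "'a::field set \<Rightarrow> ('a set \<Rightarrow> 'a set) \<Rightarrow> 'a \<Rightarrow> bool" where
  "star_wf_homog_elem D st x \<longleftrightarrow> star_wf_homog D st (principal D x)"

definition star_wf_SH :: "'a::field set \<Rightarrow> ('a set \<Rightarrow> 'a set) \<Rightarrow> bool" where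
  "star_wf_SH D st \<longleftrightarrow> (\<forall>x\<in>D. x \<noteq> 0 \<longrightarrow> \<not> is_unit_in D x \<longrightarrow>
     (\<exists>xs. (\<forall>y\<in>set xs. y \<in> D \<and> star_wf_homog_elem D st y) \<and> x = prod_list xs))"

end

theory Submission imports Defs begin

text \<open>A factorisation of a nonunit x into \<open>\<ast>\<close>-wf-homogeneous elements is in particular a
\<open>\<ast>\<close>-factorisation of xD into principal \<open>\<ast>\<close>-homogeneous ideals.  Conversely, every factor of a
\<open>\<ast>\<close>-factorisation of xD is \<open>\<ast>\<close>-invertible, so if \<open>Cl\<^sub>\<ast>(D) = 0\<close> the factors are principal, generated
by \<open>\<ast>\<close>-wf-homogeneous elements whose product is x up to a unit.  Finally, one principal
\<open>\<ast>\<close>-wf-homogeneous ideal yD already kills the class group: every \<open>\<ast>\<close>-invertible \<open>\<ast>\<close>-ideal has a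
multiple containing yD, and that multiple is principal.\<close>

lemma ex_map_preimage:
  assumes "\<And>z. z \<in> set zs \<Longrightarrow> \<exists>y. P y \<and> z = f y"
  shows "\<exists>ys. map f ys = zs \<and> (\<forall>y\<in>set ys. P y)"
  using assms
proof (induction zs)
  case Nil show ?case by simp
next
  case (Cons z zs)
  obtain ys where "map f ys = zs" "\<forall>y\<in>set ys. P y" using Cons by auto
  moreover obtain y where "P y" "z = f y" using Cons.prems by auto
  ultimately show ?case by (intro exI[of _ "y # ys"]) auto
qed

section \<open>Fractional ideals\<close>

locale domain_qf =
  fixes D :: "'a::field set"
  assumes domain: "domain_with_qf D"
begin

lemma zero_mem: "0 \<in> D"
  and one_mem: "1 \<in> D"
  and add_mem: "x \<in> D \<Longrightarrow> y \<in> D \<Longrightarrow> x + y \<in> D"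
  and mult_mem: "x \<in> D \<Longrightarrow> y \<in> D \<Longrightarrow> x * y \<in> D"
  and quotient_repr: "\<exists>a\<in>D. \<exists>b\<in>D. b \<noteq> 0 \<and> z = a / b"
  using domain unfolding domain_with_qf_def by auto

lemma is_submodule_domain: "is_submodule D D"
  unfolding is_submodule_def using zero_mem add_mem mult_mem by blast

lemma is_submodule_gen: "is_submodule D (gen D S)"
  unfolding is_submodule_def
proof (intro conjI ballI)
  show "0 \<in> gen D S" unfolding gen_def by (rule CollectI, rule exI[of _ "{}"]) auto
next
  fix x y assume "x \<in> gen D S" "y \<in> gen D S"
  then obtain F f G g where F: "finite F" "F \<subseteq> S" "\<forall>s\<in>F. f s \<in> D" "x = (\<Sum>s\<in>F. f s * s)"
    and G: "finite G" "G \<subseteq> S" "\<forall>s\<in>G. g s \<in> D" "y = (\<Sum>s\<in>G. g s * s)"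
    unfolding gen_def by blast
  define h where "h s = (if s \<in> F then f s else 0) + (if s \<in> G then g s else 0)" for s
  have "(\<Sum>s\<in>F\<union>G. h s * s) = (\<Sum>s\<in>F\<union>G. (if s \<in> F then f s else 0) * s)
      + (\<Sum>s\<in>F\<union>G. (if s \<in> G then g s else 0) * s)"
    unfolding h_def by (simp add: distrib_right sum.distrib)
  also have "(\<Sum>s\<in>F\<union>G. (if s \<in> F then f s else 0) * s) = x"
    unfolding F(4) by (rule sum.mono_neutral_cong_right) (use F(1) G(1) in auto)
  also have "(\<Sum>s\<in>F\<union>G. (if s \<in> G then g s else 0) * s) = y"
    unfolding G(4) by (rule sum.mono_neutral_cong_right) (use F(1) G(1) in auto)
  finally have "x + y = (\<Sum>s\<in>F\<union>G. h s * s)" by simp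
  moreover have "\<forall>s\<in>F\<union>G. h s \<in> D" unfolding h_def using F G zero_mem add_mem by auto
  ultimately show "x + y \<in> gen D S" unfolding gen_def using F G by blast
next
  fix d x assume d: "d \<in> D" and "x \<in> gen D S"
  then obtain F f where F: "finite F" "F \<subseteq> S" "\<forall>s\<in>F. f s \<in> D" "x = (\<Sum>s\<in>F. f s * s)"
    unfolding gen_def by blast
  have "d * x = (\<Sum>s\<in>F. (d * f s) * s)" using F(4) by (simp add: sum_distrib_left mult.assoc)
  moreover have "\<forall>s\<in>F. d * f s \<in> D" using F d mult_mem by auto
  ultimately show "d * x \<in> gen D S" unfolding gen_def
    by (intro CollectI exI[of _ F] exI[of _ "\<lambda>s. d * f s"]) (use F in auto)
qed

lemma gen_superset: "S \<subseteq> gen D S"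
proof
  fix s assume "s \<in> S"
  then show "s \<in> gen D S" unfolding gen_def using one_mem
    by (intro CollectI exI[of _ "{s}"] exI[of _ "\<lambda>_. 1"]) auto
qed

lemma gen_least:
  assumes "is_submodule D T" "S \<subseteq> T"
  shows "gen D S \<subseteq> T"
proof
  fix x assume "x \<in> gen D S"
  then obtain F f where F: "finite F" "F \<subseteq> S" "\<forall>s\<in>F. f s \<in> D" "x = (\<Sum>s\<in>F. f s * s)"
    unfolding gen_def by blast
  have "F \<subseteq> S \<longrightarrow> (\<forall>s\<in>F. f s \<in> D) \<longrightarrow> (\<Sum>s\<in>F. f s * s) \<in> T"
    using F(1) by (induction F rule: finite_induct) (use assms in \<open>auto simp: is_submodule_def\<close>)
  then show "x \<in> T" using F by auto
qed

lemma is_submodule_preimage_mult: "is_submodule D T \<Longrightarrow> is_submodule D {z. c * z \<in> T}"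
  unfolding is_submodule_def by (simp add: distrib_left mult.left_commute)

lemma is_submodule_principal: "is_submodule D (principal D y)"
  unfolding is_submodule_def principal_def
proof (intro conjI ballI)
  show "0 \<in> {y * d |d. d \<in> D}" using zero_mem by force
next
  fix u v assume "u \<in> {y * d |d. d \<in> D}" "v \<in> {y * d |d. d \<in> D}"
  then obtain d1 d2 where "d1 \<in> D" "d2 \<in> D" "u = y * d1" "v = y * d2" by blast
  then have "u + v = y * (d1 + d2)" "d1 + d2 \<in> D" using add_mem by (auto simp: distrib_left)
  then show "u + v \<in> {y * d |d. d \<in> D}" by blast
next
  fix d u assume "d \<in> D" "u \<in> {y * d |d. d \<in> D}"
  then obtain e where "e \<in> D" "u = y * e" by blast
  then have "d * u = y * (d * e)" "d * e \<in> D"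
    using mult_mem[OF \<open>d \<in> D\<close>] by (auto simp: mult.left_commute)
  then show "d * u \<in> {y * d |d. d \<in> D}" by blast
qed

lemma principal_one: "principal D 1 = D"
  unfolding principal_def by simp

lemma mem_principal_self: "y \<in> principal D y"
  unfolding principal_def using one_mem by force

lemma principal_mult_unit:
  assumes "u \<in> D" "v \<in> D" "u * v = 1"
  shows "principal D (y * u) = principal D y"
proof
  show "principal D (y * u) \<subseteq> principal D y"
  proof
    fix z assume "z \<in> principal D (y * u)"
    then obtain d where "d \<in> D" "z = y * u * d" unfolding principal_def by blast
    then show "z \<in> principal D y" unfolding principal_def using mult_mem[OF assms(1)]
      by (intro CollectI exI[of _ "u * d"]) (simp add: ac_simps)
  qed
  show "principal D y \<subseteq> principal D (y * u)"
  proof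
    fix z assume "z \<in> principal D y"
    then obtain d where "d \<in> D" "z = y * d" unfolding principal_def by blast
    moreover have "y * d = y * u * (v * d)" using assms(3) by (simp add: ac_simps)
    ultimately show "z \<in> principal D (y * u)"
      unfolding principal_def using mult_mem[OF assms(2)] by blast
  qed
qed

lemma is_submodule_smult_set: "is_submodule D T \<Longrightarrow> is_submodule D (smult_set c T)"
  unfolding is_submodule_def smult_set_def
  by (auto simp: distrib_left[symmetric] mult.left_commute image_iff)

lemma principal_eq_unit_multiple:
  assumes "principal D x = principal D p" "x \<noteq> 0"
  obtains u v where "u \<in> D" "v \<in> D" "u * v = 1" "x = p * u"
proof -
  obtain u where u: "u \<in> D" "x = p * u"
    using mem_principal_self[of x] assms(1) unfolding principal_def by blast
  obtain v where v: "v \<in> D" "p = x * v"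
    using mem_principal_self[of p] assms(1) unfolding principal_def by blast
  have "x * (v * u) = x * 1" using u(2) v(2) by (simp add: ac_simps)
  then have "u * v = 1" using assms(2) by (simp add: mult.commute)
  then show ?thesis using that u v by blast
qed

lemma smult_set_principal: "smult_set c (principal D y) = principal D (c * y)"
  unfolding smult_set_def principal_def by (auto simp: mult.assoc)

lemma smult_set_smult_set: "smult_set a (smult_set b T) = smult_set (a * b) T"
  unfolding smult_set_def by (auto simp: image_image mult.assoc)

lemma smult_set_one: "smult_set 1 T = T"
  unfolding smult_set_def by simp

lemma frac_ideal_nonzero: "frac_ideal D I \<Longrightarrow> \<exists>a\<in>I. a \<noteq> 0"
  unfolding frac_ideal_def is_submodule_def by blast

lemma frac_ideal_principal:
  assumes "y \<noteq> 0"
  shows "frac_ideal D (principal D y)"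
proof -
  obtain a b where ab: "a \<in> D" "b \<in> D" "b \<noteq> 0" "y = a / b" using quotient_repr by blast
  have "\<forall>x\<in>principal D y. b * x \<in> D"
    unfolding principal_def using ab mult_mem[OF ab(1)] by auto
  moreover have "principal D y \<noteq> {0}" using mem_principal_self assms by blast
  ultimately show ?thesis unfolding frac_ideal_def using is_submodule_principal ab by blast
qed

lemma frac_ideal_domain: "frac_ideal D D"
  using frac_ideal_principal[of 1] by (simp add: principal_one)

lemma frac_ideal_smult_set:
  assumes "frac_ideal D I" "c \<noteq> 0"
  shows "frac_ideal D (smult_set c I)"
proof -
  obtain d where d: "d \<in> D" "d \<noteq> 0" "\<forall>x\<in>I. d * x \<in> D"
    using assms(1) unfolding frac_ideal_def by blast
  obtain a b where ab: "a \<in> D" "b \<in> D" "b \<noteq> 0" "c = a / b" using quotient_repr by blast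
  have "\<forall>x\<in>smult_set c I. (b * d) * x \<in> D"
  proof
    fix x assume "x \<in> smult_set c I"
    then obtain i where i: "i \<in> I" "x = c * i" unfolding smult_set_def by blast
    have e: "(b * d) * x = a * (d * i)" using ab(3,4) i(2) by (simp add: field_simps)
    have "a * (d * i) \<in> D" using mult_mem[OF ab(1)] d(3) i(1) by blast
    then show "(b * d) * x \<in> D" by (simp only: e)
  qed
  moreover have "smult_set c I \<noteq> {0}"
  proof -
    obtain a where "a \<in> I" "a \<noteq> 0" using frac_ideal_nonzero[OF assms(1)] by blast
    then have "c * a \<in> smult_set c I" "c * a \<noteq> 0" using assms(2) unfolding smult_set_def by auto
    then show ?thesis by blast
  qed
  moreover have "is_submodule D (smult_set c I)"
    using assms(1) is_submodule_smult_set unfolding frac_ideal_def by blast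
  moreover have "b * d \<in> D" "b * d \<noteq> 0" using ab d mult_mem by auto
  ultimately show ?thesis unfolding frac_ideal_def by blast
qed

lemma frac_ideal_frac_inverse:
  assumes "frac_ideal D I"
  shows "frac_ideal D (frac_inverse D I)"
proof -
  obtain d where d: "d \<in> D" "d \<noteq> 0" "\<forall>x\<in>I. d * x \<in> D"
    using assms unfolding frac_ideal_def by blast
  obtain a where a: "a \<in> I" "a \<noteq> 0" using frac_ideal_nonzero[OF assms] by blast
  obtain p q where pq: "p \<in> D" "q \<in> D" "q \<noteq> 0" "a = p / q" using quotient_repr by blast
  have qa: "q * a \<in> I" "q * a \<in> D" "q * a \<noteq> 0"
    using a pq assms unfolding frac_ideal_def is_submodule_def by (blast, simp_all)
  have "is_submodule D (frac_inverse D I)"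
    unfolding is_submodule_def frac_inverse_def
    using zero_mem add_mem mult_mem by (auto simp: distrib_right mult.assoc)
  moreover have "d \<in> frac_inverse D I" unfolding frac_inverse_def using d by simp
  moreover have "\<forall>x\<in>frac_inverse D I. (q * a) * x \<in> D"
    using qa(1) unfolding frac_inverse_def by (auto simp: mult.commute)
  ultimately show ?thesis unfolding frac_ideal_def using d(2) qa(2,3) by blast
qed

lemma frac_ideal_principal_if_field:
  assumes "\<forall>x\<in>D. x \<noteq> 0 \<longrightarrow> is_unit_in D x" "frac_ideal D I"
  shows "is_principal D I"
proof -
  have everything: "z \<in> D" for z
  proof -
    obtain a b where ab: "a \<in> D" "b \<in> D" "b \<noteq> 0" "z = a / b" using quotient_repr by blast
    obtain w where w: "w \<in> D" "b * w = 1" using assms(1) ab(2,3) unfolding is_unit_in_def by blast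
    have "w = 1 / b" using w(2) ab(3) by (simp add: eq_divide_eq mult.commute)
    then have "z = a * w" using ab(4) by simp
    then show "z \<in> D" using mult_mem[OF ab(1) w(1)] by simp
  qed
  obtain a where a: "a \<in> I" "a \<noteq> 0" using frac_ideal_nonzero[OF assms(2)] by blast
  have "z \<in> I" for z
  proof -
    have "(z / a) * a \<in> I"
      using assms(2) everything a(1) unfolding frac_ideal_def is_submodule_def by blast
    then show ?thesis using a(2) by simp
  qed
  then have "I = principal D 1" unfolding principal_one using everything by blast
  then show ?thesis unfolding is_principal_def by (intro exI[of _ 1]) simp
qed

lemma ideal_mult_least:
  assumes "is_submodule D T" "\<forall>a\<in>A. \<forall>b\<in>B. a * b \<in> T"
  shows "ideal_mult D A B \<subseteq> T"
  unfolding ideal_mult_def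
proof (rule gen_least[OF assms(1)])
  show "{x * y |x y. x \<in> A \<and> y \<in> B} \<subseteq> T" using assms(2) by force
qed

lemma ideal_mult_mem: "a \<in> A \<Longrightarrow> b \<in> B \<Longrightarrow> a * b \<in> ideal_mult D A B"
  unfolding ideal_mult_def by (rule subsetD[OF gen_superset]) blast

lemma is_submodule_ideal_mult: "is_submodule D (ideal_mult D A B)"
  unfolding ideal_mult_def by (rule is_submodule_gen)

lemma ideal_mult_commute: "ideal_mult D A B = ideal_mult D B A"
proof -
  have "{x * y |x y. x \<in> A \<and> y \<in> B} = {x * y |x y. x \<in> B \<and> y \<in> A}"
    by (metis mult.commute)
  then show ?thesis unfolding ideal_mult_def by simp
qed

lemma ideal_mult_assoc_subset:
  "ideal_mult D (ideal_mult D A B) C \<subseteq> ideal_mult D A (ideal_mult D B C)"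
proof (rule ideal_mult_least[OF is_submodule_ideal_mult], intro ballI)
  fix x z assume x: "x \<in> ideal_mult D A B" and z: "z \<in> C"
  have "ideal_mult D A B \<subseteq> {x. z * x \<in> ideal_mult D A (ideal_mult D B C)}"
  proof (rule ideal_mult_least[OF is_submodule_preimage_mult[OF is_submodule_ideal_mult]], intro ballI)
    fix a b assume "a \<in> A" "b \<in> B"
    then have "a * (b * z) \<in> ideal_mult D A (ideal_mult D B C)"
      using ideal_mult_mem[OF \<open>a \<in> A\<close> ideal_mult_mem[OF \<open>b \<in> B\<close> z]] by simp
    then show "a * b \<in> {x. z * x \<in> ideal_mult D A (ideal_mult D B C)}" by (simp add: ac_simps)
  qed
  with x show "x * z \<in> ideal_mult D A (ideal_mult D B C)" by (auto simp: mult.commute)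
qed

lemma ideal_mult_assoc:
  "ideal_mult D (ideal_mult D A B) C = ideal_mult D A (ideal_mult D B C)"
proof
  show "ideal_mult D (ideal_mult D A B) C \<subseteq> ideal_mult D A (ideal_mult D B C)"
    by (rule ideal_mult_assoc_subset)
  have "ideal_mult D A (ideal_mult D B C) = ideal_mult D (ideal_mult D C B) A"
    by (simp only: ideal_mult_commute[of A] ideal_mult_commute[of B])
  also have "\<dots> \<subseteq> ideal_mult D C (ideal_mult D B A)"
    by (rule ideal_mult_assoc_subset)
  also have "\<dots> = ideal_mult D (ideal_mult D A B) C"
    by (simp only: ideal_mult_commute[of C] ideal_mult_commute[of B])
  finally show "ideal_mult D A (ideal_mult D B C) \<subseteq> ideal_mult D (ideal_mult D A B) C" .
qed

lemma frac_ideal_ideal_mult: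
  assumes "frac_ideal D I" "frac_ideal D J"
  shows "frac_ideal D (ideal_mult D I J)"
proof -
  obtain d where d: "d \<in> D" "d \<noteq> 0" "\<forall>x\<in>I. d * x \<in> D"
    using assms(1) unfolding frac_ideal_def by blast
  obtain e where e: "e \<in> D" "e \<noteq> 0" "\<forall>x\<in>J. e * x \<in> D"
    using assms(2) unfolding frac_ideal_def by blast
  obtain a where a: "a \<in> I" "a \<noteq> 0" using frac_ideal_nonzero[OF assms(1)] by blast
  obtain b where b: "b \<in> J" "b \<noteq> 0" using frac_ideal_nonzero[OF assms(2)] by blast
  have "a * b \<in> ideal_mult D I J" "a * b \<noteq> 0" using ideal_mult_mem[OF a(1) b(1)] a b by auto
  then have "ideal_mult D I J \<noteq> {0}" by blast
  moreover have "ideal_mult D I J \<subseteq> {z. (d * e) * z \<in> D}"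
  proof (rule ideal_mult_least[OF is_submodule_preimage_mult[OF is_submodule_domain]], intro ballI)
    fix x y assume "x \<in> I" "y \<in> J"
    then have "(d * x) * (e * y) \<in> D" using d(3) e(3) mult_mem by blast
    then show "x * y \<in> {z. d * e * z \<in> D}" by (simp add: ac_simps)
  qed
  moreover have "d * e \<in> D" "d * e \<noteq> 0" using mult_mem[OF d(1) e(1)] d(2) e(2) by auto
  ultimately show ?thesis unfolding frac_ideal_def using is_submodule_ideal_mult by blast
qed

lemma ideal_mult_principal: "ideal_mult D (principal D a) (principal D b) = principal D (a * b)"
proof
  show "ideal_mult D (principal D a) (principal D b) \<subseteq> principal D (a * b)"
    by (rule ideal_mult_least[OF is_submodule_principal])
       (auto simp: principal_def ac_simps intro: mult_mem)
  show "principal D (a * b) \<subseteq> ideal_mult D (principal D a) (principal D b)"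
  proof
    fix z assume "z \<in> principal D (a * b)"
    then obtain d where d: "d \<in> D" "z = a * b * d" unfolding principal_def by blast
    have "a * d \<in> principal D a" using d(1) unfolding principal_def by auto
    then have "(a * d) * b \<in> ideal_mult D (principal D a) (principal D b)"
      using ideal_mult_mem mem_principal_self by blast
    then show "z \<in> ideal_mult D (principal D a) (principal D b)" using d(2) by (simp add: ac_simps)
  qed
qed

lemma ideal_prod_list_principal:
  "ideal_prod_list D (map (principal D) xs) = principal D (prod_list xs)"
  by (induction xs) (auto simp: ideal_prod_list_def principal_one ideal_mult_principal)

lemma frac_ideal_ideal_prod_list:
  "\<forall>I\<in>set Is. frac_ideal D I \<Longrightarrow> frac_ideal D (ideal_prod_list D Is)"
  by (induction Is) (auto simp: ideal_prod_list_def frac_ideal_domain intro: frac_ideal_ideal_mult)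

lemma ideal_prod_list_split_factor:
  assumes "\<forall>I\<in>set Is. frac_ideal D I" "I \<in> set Is"
  obtains Q where "frac_ideal D Q" "ideal_prod_list D Is = ideal_mult D I Q"
  using assms
proof (induction Is arbitrary: thesis)
  case Nil then show ?case by simp
next
  case (Cons J Is)
  have J: "ideal_prod_list D (J # Is) = ideal_mult D J (ideal_prod_list D Is)"
    unfolding ideal_prod_list_def by simp
  show ?case
  proof (cases "I = J")
    case True
    then show ?thesis using Cons.prems J frac_ideal_ideal_prod_list[of Is] by auto
  next
    case False
    then obtain Q where Q: "frac_ideal D Q" "ideal_prod_list D Is = ideal_mult D I Q"
      using Cons.IH Cons.prems by auto
    have "ideal_prod_list D (J # Is) = ideal_mult D I (ideal_mult D J Q)"
      unfolding J Q(2) ideal_mult_assoc[symmetric] by (simp only: ideal_mult_commute[of J])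
    then show ?thesis using Cons.prems frac_ideal_ideal_mult[OF _ Q(1), of J] by auto
  qed
qed

lemma frac_inverse_principal:
  assumes "y \<noteq> 0"
  shows "frac_inverse D (principal D y) = principal D (1 / y)"
proof
  show "frac_inverse D (principal D y) \<subseteq> principal D (1 / y)"
  proof
    fix x assume "x \<in> frac_inverse D (principal D y)"
    then have "x * y \<in> D" using mem_principal_self unfolding frac_inverse_def by blast
    moreover have "x = (1 / y) * (x * y)" using assms by simp
    ultimately show "x \<in> principal D (1 / y)" unfolding principal_def by blast
  qed
  show "principal D (1 / y) \<subseteq> frac_inverse D (principal D y)"
  proof
    fix x assume "x \<in> principal D (1 / y)"
    then obtain e where e: "e \<in> D" "x = (1 / y) * e" unfolding principal_def by blast
    have "x * z \<in> D" if "z \<in> principal D y" for z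
    proof -
      obtain d where d: "d \<in> D" "z = y * d" using \<open>z \<in> principal D y\<close> unfolding principal_def by blast
      have "x * z = e * d" using e(2) d(2) assms by simp
      then show "x * z \<in> D" using mult_mem[OF e(1) d(1)] by simp
    qed
    then show "x \<in> frac_inverse D (principal D y)" unfolding frac_inverse_def by blast
  qed
qed

lemma frac_inverse_smult_set:
  assumes "c \<noteq> 0"
  shows "frac_inverse D (smult_set c I) = smult_set (1 / c) (frac_inverse D I)"
proof
  show "frac_inverse D (smult_set c I) \<subseteq> smult_set (1 / c) (frac_inverse D I)"
  proof
    fix x assume x: "x \<in> frac_inverse D (smult_set c I)"
    have "c * x * i \<in> D" if "i \<in> I" for i
    proof -
      have "c * i \<in> smult_set c I" using that unfolding smult_set_def by blast
      then have "x * (c * i) \<in> D" using x unfolding frac_inverse_def by blast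
      then show ?thesis by (simp add: ac_simps)
    qed
    then have "c * x \<in> frac_inverse D I" unfolding frac_inverse_def by blast
    moreover have "x = (1 / c) * (c * x)" using assms by simp
    ultimately show "x \<in> smult_set (1 / c) (frac_inverse D I)" unfolding smult_set_def by blast
  qed
  show "smult_set (1 / c) (frac_inverse D I) \<subseteq> frac_inverse D (smult_set c I)"
  proof
    fix x assume "x \<in> smult_set (1 / c) (frac_inverse D I)"
    then obtain u where u: "u \<in> frac_inverse D I" "x = (1 / c) * u" unfolding smult_set_def by blast
    have "x * z \<in> D" if z: "z \<in> smult_set c I" for z
    proof -
      obtain i where i: "i \<in> I" "z = c * i" using z unfolding smult_set_def by blast
      have "x * z = u * i" using u(2) i(2) assms by simp
      then show "x * z \<in> D" using u(1) i(1) unfolding frac_inverse_def by simp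
    qed
    then show "x \<in> frac_inverse D (smult_set c I)" unfolding frac_inverse_def by blast
  qed
qed

lemma ideal_mult_smult_set_cancel:
  assumes "c \<noteq> 0"
  shows "ideal_mult D (smult_set c I) (smult_set (1 / c) J) = ideal_mult D I J"
proof -
  have "{x * y |x y. x \<in> smult_set c I \<and> y \<in> smult_set (1 / c) J} = {x * y |x y. x \<in> I \<and> y \<in> J}"
  proof (intro set_eqI iffI)
    fix z assume "z \<in> {x * y |x y. x \<in> smult_set c I \<and> y \<in> smult_set (1 / c) J}"
    then obtain x y where "x \<in> smult_set c I" "y \<in> smult_set (1 / c) J" "z = x * y" by blast
    then obtain i j where "i \<in> I" "j \<in> J" "z = (c * i) * ((1 / c) * j)" unfolding smult_set_def by blast
    moreover have "(c * i) * ((1 / c) * j) = i * j" using assms by simp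
    ultimately show "z \<in> {x * y |x y. x \<in> I \<and> y \<in> J}"
      by (intro CollectI exI[of _ i] exI[of _ j]) simp
  next
    fix z assume "z \<in> {x * y |x y. x \<in> I \<and> y \<in> J}"
    then obtain i j where ij: "i \<in> I" "j \<in> J" "z = i * j" by blast
    have "c * i \<in> smult_set c I" "(1 / c) * j \<in> smult_set (1 / c) J" using ij unfolding smult_set_def by auto
    moreover have "z = (c * i) * ((1 / c) * j)" using assms ij(3) by simp
    ultimately show "z \<in> {x * y |x y. x \<in> smult_set c I \<and> y \<in> smult_set (1 / c) J}"
      by (intro CollectI exI[of _ "c * i"] exI[of _ "(1 / c) * j"]) simp
  qed
  then show ?thesis unfolding ideal_mult_def by simp
qed

end

section \<open>Star operations\<close>

locale star_domain = domain_qf +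
  fixes st :: "'a::field set \<Rightarrow> 'a set"
  assumes star: "star_op D st"
begin

lemma star_principal: "x \<noteq> 0 \<Longrightarrow> st (principal D x) = principal D x"
  and star_smult_set: "x \<noteq> 0 \<Longrightarrow> frac_ideal D I \<Longrightarrow> st (smult_set x I) = smult_set x (st I)"
  and star_extensive: "frac_ideal D I \<Longrightarrow> I \<subseteq> st I"
  and star_mono: "frac_ideal D I \<Longrightarrow> frac_ideal D J \<Longrightarrow> I \<subseteq> J \<Longrightarrow> st I \<subseteq> st J"
  using star unfolding star_op_def by simp_all

lemma star_of_domain: "st D = D"
  using star_principal[of 1] by (simp add: principal_one)

lemma star_invertible_principal: "y \<noteq> 0 \<Longrightarrow> star_invertible D st (principal D y)"
  unfolding star_invertible_def
  by (simp add: frac_inverse_principal ideal_mult_principal principal_one star_of_domain)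

lemma star_invertible_smult_set:
  assumes "star_invertible D st I" "c \<noteq> 0"
  shows "star_invertible D st (smult_set c I)"
  using assms(1) unfolding star_invertible_def
    frac_inverse_smult_set[OF assms(2)] ideal_mult_smult_set_cancel[OF assms(2)] .

lemma star_ideal_smult_set:
  assumes "star_ideal D st I" "c \<noteq> 0"
  shows "star_ideal D st (smult_set c I)"
  using assms frac_ideal_smult_set star_smult_set unfolding star_ideal_def by simp

text \<open>A factor of a \<open>\<ast>\<close>-invertible product is \<open>\<ast>\<close>-invertible: with \<open>(IJ)\<^sup>\<ast> = xD\<close> one has
  \<open>x\<^sup>-\<^sup>1 J \<subseteq> I\<^sup>-\<^sup>1\<close>, hence \<open>D = (x\<^sup>-\<^sup>1 IJ)\<^sup>\<ast> \<subseteq> (II\<^sup>-\<^sup>1)\<^sup>\<ast> \<subseteq> D\<close>.\<close>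
lemma star_invertible_factor:
  assumes "frac_ideal D I" "frac_ideal D J" "x \<noteq> 0"
    and IJ: "st (ideal_mult D I J) = principal D x"
  shows "star_invertible D st I"
proof -
  let ?M = "ideal_mult D I J" and ?P = "ideal_mult D I (frac_inverse D I)"
  have fM: "frac_ideal D ?M" using frac_ideal_ideal_mult[OF assms(1,2)] .
  have fP: "frac_ideal D ?P"
    using frac_ideal_ideal_mult[OF assms(1) frac_ideal_frac_inverse[OF assms(1)]] .
  have M_sub: "?M \<subseteq> principal D x" using star_extensive[OF fM] IJ by simp
  have "?P \<subseteq> D"
    by (rule ideal_mult_least[OF is_submodule_domain]) (auto simp: frac_inverse_def mult.commute)
  then have upper: "st ?P \<subseteq> D"
    using star_mono[OF fP frac_ideal_domain] star_of_domain by simp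
  have "?M \<subseteq> {z. (1 / x) * z \<in> ?P}"
  proof (rule ideal_mult_least[OF is_submodule_preimage_mult[OF is_submodule_ideal_mult]], intro ballI)
    fix a b assume ab: "a \<in> I" "b \<in> J"
    have "b / x * i \<in> D" if "i \<in> I" for i
    proof -
      have "i * b \<in> principal D x" using ideal_mult_mem[OF that ab(2)] M_sub by blast
      then obtain d where "d \<in> D" "i * b = x * d" unfolding principal_def by blast
      moreover from this have "b / x * i = d" using assms(3) by (simp add: field_simps)
      ultimately show ?thesis by simp
    qed
    then have "b / x \<in> frac_inverse D I" unfolding frac_inverse_def by blast
    then have "a * (b / x) \<in> ?P" by (rule ideal_mult_mem[OF ab(1)])
    then show "a * b \<in> {z. 1 / x * z \<in> ?P}" by simp
  qed
  then have sub: "smult_set (1 / x) ?M \<subseteq> ?P" unfolding smult_set_def by blast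
  have "D = smult_set (1 / x) (principal D x)"
    using assms(3) by (simp add: smult_set_principal principal_one)
  also have "\<dots> = st (smult_set (1 / x) ?M)" using star_smult_set[OF _ fM, of "1 / x"] assms(3) IJ by simp
  also have "\<dots> \<subseteq> st ?P"
    using star_mono[OF frac_ideal_smult_set[OF fM] fP sub] assms(3) by simp
  finally show ?thesis unfolding star_invertible_def using upper by blast
qed

section \<open>Star-homogeneous factorisations\<close>

lemma star_product_factor_star_invertible:
  assumes "\<forall>J\<in>set Is. frac_ideal D J" "I \<in> set Is" "x \<noteq> 0"
    and "st (ideal_prod_list D Is) = principal D x"
  shows "star_invertible D st I"
proof -
  obtain Q where "frac_ideal D Q" "ideal_prod_list D Is = ideal_mult D I Q"
    using ideal_prod_list_split_factor[OF assms(1,2)] .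
  then show ?thesis
    using star_invertible_factor[OF _ _ assms(3)] assms(1,2,4) by simp
qed

lemma star_homog_star_ideal: "star_homog D st I \<Longrightarrow> star_ideal D st I"
  and star_homog_subset: "star_homog D st I \<Longrightarrow> I \<subseteq> D"
  unfolding star_homog_def pift_def by simp_all

lemma star_wf_homog_elem_star_homog:
  "star_wf_homog_elem D st y \<Longrightarrow> star_homog D st (principal D y)"
  unfolding star_wf_homog_elem_def star_wf_homog_def by blast

lemma star_wf_homog_elem_if_class_group_trivial:
  "star_class_group_trivial D st \<Longrightarrow> star_homog D st (principal D y) \<Longrightarrow> star_wf_homog_elem D st y"
  unfolding star_wf_homog_elem_def star_wf_homog_def star_class_group_trivial_def by blast

lemma star_wf_homog_elem_mult_unit:
  "u \<in> D \<Longrightarrow> v \<in> D \<Longrightarrow> u * v = 1 \<Longrightarrow> star_wf_homog_elem D st (y * u) = star_wf_homog_elem D st y"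
  unfolding star_wf_homog_elem_def by (simp add: principal_mult_unit)

text \<open>Every \<open>\<ast>\<close>-invertible \<open>\<ast>\<close>-ideal I has the multiple \<open>(y/a) I \<supseteq> yD\<close>, for any nonzero \<open>a \<in> I\<close>.\<close>
lemma class_group_trivial_if_principal_above:
  assumes "y \<noteq> 0"
    and above: "\<And>J. star_ideal D st J \<Longrightarrow> star_invertible D st J \<Longrightarrow> principal D y \<subseteq> J \<Longrightarrow> is_principal D J"
  shows "star_class_group_trivial D st"
  unfolding star_class_group_trivial_def
proof (intro allI impI, elim conjE)
  fix I assume I: "star_ideal D st I" "star_invertible D st I"
  then have fI: "frac_ideal D I" unfolding star_ideal_def by simp
  obtain a where a: "a \<in> I" "a \<noteq> 0" using frac_ideal_nonzero[OF fI] by blast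
  let ?J = "smult_set (y / a) I"
  have c: "y / a \<noteq> 0" using assms(1) a(2) by simp
  have "principal D y \<subseteq> ?J"
  proof
    fix z assume "z \<in> principal D y"
    then obtain d where d: "d \<in> D" "z = y * d" unfolding principal_def by blast
    have "d * a \<in> I" using fI d(1) a(1) unfolding frac_ideal_def is_submodule_def by blast
    moreover have "z = (y / a) * (d * a)" using d(2) a(2) by simp
    ultimately show "z \<in> ?J" unfolding smult_set_def by blast
  qed
  then obtain b where b: "b \<noteq> 0" "?J = principal D b"
    using above star_ideal_smult_set[OF I(1) c] star_invertible_smult_set[OF I(2) c]
    unfolding is_principal_def by blast
  have "I = smult_set (a / y) ?J" using a(2) assms(1) by (simp add: smult_set_smult_set smult_set_one)
  also have "\<dots> = principal D ((a / y) * b)" unfolding b(2) smult_set_principal ..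
  finally show "is_principal D I"
    unfolding is_principal_def using a(2) assms(1) b(1) by (intro exI[of _ "(a / y) * b"]) simp
qed

lemma star_wf_SH_imp_star_SH:
  assumes "star_wf_SH D st"
  shows "star_SH D st"
  unfolding star_SH_def
proof (intro ballI impI)
  fix x assume x: "x \<in> D" "x \<noteq> 0" "\<not> is_unit_in D x"
  then obtain xs where xs: "\<forall>y\<in>set xs. y \<in> D \<and> star_wf_homog_elem D st y" "x = prod_list xs"
    using assms unfolding star_wf_SH_def by blast
  have "principal D x = st (ideal_prod_list D (map (principal D) xs))"
    unfolding ideal_prod_list_principal xs(2)[symmetric] using star_principal[OF x(2)] by simp
  moreover have "\<forall>I\<in>set (map (principal D) xs). star_homog D st I"
    using xs(1) star_wf_homog_elem_star_homog by auto
  ultimately show "\<exists>Is. (\<forall>I\<in>set Is. star_homog D st I) \<and> principal D x = st (ideal_prod_list D Is)"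
    by blast
qed

lemma star_wf_SH_imp_class_group_trivial:
  assumes "star_wf_SH D st"
  shows "star_class_group_trivial D st"
proof (cases "\<forall>x\<in>D. x \<noteq> 0 \<longrightarrow> is_unit_in D x")
  case True
  then show ?thesis
    unfolding star_class_group_trivial_def star_ideal_def using frac_ideal_principal_if_field by blast
next
  case False
  then obtain x where x: "x \<in> D" "x \<noteq> 0" "\<not> is_unit_in D x" by blast
  then obtain xs where xs: "\<forall>y\<in>set xs. y \<in> D \<and> star_wf_homog_elem D st y" "x = prod_list xs"
    using assms unfolding star_wf_SH_def by blast
  have "xs \<noteq> []" using xs(2) x(3) one_mem unfolding is_unit_in_def by force
  then obtain y where y: "y \<in> set xs" by (cases xs) auto
  have "y \<noteq> 0" using x(2) xs(2) y prod_list_zero_iff by metis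
  moreover have "star_wf_homog_elem D st y" using xs(1) y by blast
  ultimately show ?thesis
    using star_invertible_principal class_group_trivial_if_principal_above
    unfolding star_wf_homog_elem_def star_wf_homog_def by blast
qed

lemma star_homog_factors_principal:
  assumes "star_class_group_trivial D st" "x \<noteq> 0"
    and Is: "\<forall>I\<in>set Is. star_homog D st I" "principal D x = st (ideal_prod_list D Is)"
  obtains ys where "map (principal D) ys = Is"
    and "\<forall>y\<in>set ys. y \<in> D \<and> y \<noteq> 0 \<and> star_wf_homog_elem D st y"
proof -
  have fIs: "\<forall>I\<in>set Is. frac_ideal D I"
    using Is(1) star_homog_star_ideal unfolding star_ideal_def by blast
  have "\<exists>y. (y \<in> D \<and> y \<noteq> 0 \<and> star_wf_homog_elem D st y) \<and> I = principal D y" if I: "I \<in> set Is" for I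
  proof -
    have "star_invertible D st I"
      using star_product_factor_star_invertible[OF fIs I assms(2)] Is(2) by simp
    then obtain y where y: "y \<noteq> 0" "I = principal D y"
      using assms(1) star_homog_star_ideal Is(1) I
      unfolding star_class_group_trivial_def is_principal_def by blast
    have "y \<in> D" using mem_principal_self star_homog_subset Is(1) I y(2) by blast
    moreover have "star_wf_homog_elem D st y"
      using star_wf_homog_elem_if_class_group_trivial[OF assms(1)] Is(1) I y(2) by blast
    ultimately show ?thesis using y by blast
  qed
  then obtain ys where "map (principal D) ys = Is"
    "\<forall>y\<in>set ys. y \<in> D \<and> y \<noteq> 0 \<and> star_wf_homog_elem D st y"
    using ex_map_preimage[of Is "\<lambda>y. y \<in> D \<and> y \<noteq> 0 \<and> star_wf_homog_elem D st y" "principal D"]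
    by blast
  then show ?thesis by (rule that)
qed

lemma star_SH_imp_star_wf_SH:
  assumes "star_SH D st" "star_class_group_trivial D st"
  shows "star_wf_SH D st"
  unfolding star_wf_SH_def
proof (intro ballI impI)
  fix x assume x: "x \<in> D" "x \<noteq> 0" "\<not> is_unit_in D x"
  then obtain Is where Is: "\<forall>I\<in>set Is. star_homog D st I" "principal D x = st (ideal_prod_list D Is)"
    using assms(1) unfolding star_SH_def by blast
  obtain ys where ys: "map (principal D) ys = Is"
    "\<forall>y\<in>set ys. y \<in> D \<and> y \<noteq> 0 \<and> star_wf_homog_elem D st y"
    using star_homog_factors_principal[OF assms(2) x(2) Is] .
  have "prod_list ys \<noteq> 0" using ys(2) prod_list_zero_iff by metis
  then have "principal D x = principal D (prod_list ys)"
    using Is(2) ys(1) ideal_prod_list_principal star_principal by metis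
  then obtain u v where uv: "u \<in> D" "v \<in> D" "u * v = 1" "x = prod_list ys * u"
    using principal_eq_unit_multiple x(2) by blast
  then obtain y0 ys' where ys': "ys = y0 # ys'"
    using x(3) unfolding is_unit_in_def by (cases ys) auto
  have "\<forall>y\<in>set (y0 * u # ys'). y \<in> D \<and> star_wf_homog_elem D st y"
    using ys(2) ys' uv mult_mem star_wf_homog_elem_mult_unit by auto
  moreover have "x = prod_list (y0 * u # ys')" using uv(4) ys' by (simp add: ac_simps)
  ultimately show "\<exists>xs. (\<forall>y\<in>set xs. y \<in> D \<and> star_wf_homog_elem D st y) \<and> x = prod_list xs"
    by blast
qed

end

theorem mainTheorem17:
  fixes D :: "'a::field set" and st :: "'a set \<Rightarrow> 'a set"
  assumes "domain_with_qf D"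
    and "star_op D st"
    and "finite_character D st"
  shows "star_wf_SH D st \<longleftrightarrow> (star_SH D st \<and> star_class_group_trivial D st)"
proof -
  interpret star_domain D st using assms(1,2) by unfold_locales
  show ?thesis
    using star_wf_SH_imp_star_SH star_wf_SH_imp_class_group_trivial star_SH_imp_star_wf_SH by blast
qed

end
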